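(* Let $d$ be an integer and $x$ a real number with $0<d\leqslant x$. Let $K_d$ be the largest integer $k$ such that $(k-d)k\leqslant dx$ (i.e. $K_d=\lfloor (d+\sqrt{d^2+4dx})/2\rfloor$), and let $N_d$ be the largest integer $n$ such that $n(n+1)\leqslant x/d$ (i.e. $N_d=\lfloor(-1+\sqrt{1+4x/d}\,)/2\rfloor$). Then $$\lfloor x/(K_d+1)\rfloor \leqslant N_d \leqslant \lfloor x/K_d\rfloor.$$
   Context: $\lfloor t\rfloor$ denotes the integer part of the real number $t$. *)

theory Defs
  imports Complex_Main
begin

definition K :: "int \<Rightarrow> real \<Rightarrow> int" where
  "K d x = (GREATEST k::int. real_of_int ((k - d) * k) \<le> real_of_int d * x)"

definition N :: "int \<Rightarrow> real \<Rightarrow> int" where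
  "N d x = (GREATEST n::int. real_of_int (n * (n + 1)) \<le> x / real_of_int d)"

end

theory Submission
  imports Defs
begin

text \<open>
  Write \<open>k = K d x\<close> and \<open>n = N d x\<close>. The two claimed inequalities amount to
  \<open>n k \<le> x < (n + 1)(k + 1)\<close>. If \<open>x < n k\<close>, then the defining inequality of \<open>k\<close> gives
  \<open>k < d (n + 1)\<close> while that of \<open>n\<close> gives \<open>d (n + 1) < k\<close>; if \<open>(n + 1)(k + 1) \<le> x\<close>, the
  maximality of \<open>k\<close> gives \<open>d (n + 2) < k + 1\<close> while that of \<open>n\<close> gives
  \<open>k + 1 < d (n + 2)\<close>. Both cases are contradictory.
\<close>

lemma Greatest_int_bounded:
  fixes P :: "int \<Rightarrow> bool" and B :: real
  assumes "P a" and bounded: "\<And>k. P k \<Longrightarrow> real_of_int k \<le> B"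
  shows "P (GREATEST k. P k)" and "P k \<Longrightarrow> k \<le> (GREATEST k. P k)"
proof -
  define S where "S = {k. a \<le> k \<and> k \<le> \<lceil>B\<rceil> \<and> P k}"
  have le_ceiling: "k \<le> \<lceil>B\<rceil>" if "P k" for k
    using bounded[OF that] by linarith
  have "finite S"
    unfolding S_def by (rule finite_subset[of _ "{a..\<lceil>B\<rceil>}"]) auto
  moreover have "a \<in> S"
    using \<open>P a\<close> le_ceiling unfolding S_def by auto
  ultimately have "Max S \<in> S"
    by (intro Max_in) auto
  have below_Max: "k \<le> Max S" if "P k" for k
  proof (cases "a \<le> k")
    case True
    with that le_ceiling have "k \<in> S" unfolding S_def by auto
    with \<open>finite S\<close> show ?thesis by simp
  next
    case False
    moreover have "a \<le> Max S"
      using \<open>finite S\<close> \<open>a \<in> S\<close> by simp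
    ultimately show ?thesis by simp
  qed
  have "P (Max S)"
    using \<open>Max S \<in> S\<close> unfolding S_def by simp
  moreover have "(GREATEST k. P k) = Max S"
    using \<open>P (Max S)\<close> below_Max by (intro Greatest_equality)
  ultimately show "P (GREATEST k. P k)" and "P k \<Longrightarrow> k \<le> (GREATEST k. P k)"
    using below_Max by auto
qed

lemma K_bounds:
  assumes "0 < d" and "0 \<le> x"
  shows "(real_of_int (K d x) - d) * K d x \<le> d * x"
    and "d * x < (real_of_int (K d x) + 1 - d) * (real_of_int (K d x) + 1)"
    and "d \<le> K d x"
proof -
  let ?P = "\<lambda>k::int. real_of_int ((k - d) * k) \<le> d * x"
  have "?P d"
    using assms by simp
  moreover have K_le: "real_of_int k \<le> d + d * x" if "?P k" for k
  proof (cases "k \<le> d")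
    case True
    moreover have "0 \<le> d * x"
      using assms by simp
    ultimately show ?thesis by linarith
  next
    case False
    then have "1 * k \<le> (k - d) * k"
      using assms by (intro mult_right_mono) auto
    then have "real_of_int k \<le> real_of_int ((k - d) * k)"
      by (simp only: mult_1_left of_int_le_iff)
    moreover have "0 < real_of_int d"
      using assms by simp
    ultimately show ?thesis
      using that by linarith
  qed
  ultimately have "?P (K d x)" and greatest: "\<And>k. ?P k \<Longrightarrow> k \<le> K d x"
    unfolding K_def using Greatest_int_bounded[of ?P, OF _ K_le] by blast+
  then show "(real_of_int (K d x) - d) * K d x \<le> d * x"
    by simp
  show "d * x < (real_of_int (K d x) + 1 - d) * (real_of_int (K d x) + 1)"
    using greatest[of "K d x + 1"] by fastforce
  show "d \<le> K d x"
    using greatest \<open>?P d\<close> by blast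
qed

lemma N_bounds:
  assumes "0 < d" and "0 \<le> x"
  shows "d * (real_of_int (N d x) * (real_of_int (N d x) + 1)) \<le> x"
    and "x < d * ((real_of_int (N d x) + 1) * (real_of_int (N d x) + 2))"
    and "0 \<le> N d x"
proof -
  let ?P = "\<lambda>n::int. real_of_int (n * (n + 1)) \<le> x / d"
  have "?P 0"
    using assms by simp
  moreover have N_le: "real_of_int n \<le> x / d" if "?P n" for n
  proof -
    have "n \<le> n * (n + 1)"
      by (simp add: distrib_left)
    then have "real_of_int n \<le> real_of_int (n * (n + 1))"
      by (simp only: of_int_le_iff)
    then show ?thesis
      using that by linarith
  qed
  ultimately have "?P (N d x)" and greatest: "\<And>n. ?P n \<Longrightarrow> n \<le> N d x"
    unfolding N_def using Greatest_int_bounded[of ?P, OF _ N_le] by blast+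
  then show "d * (real_of_int (N d x) * (real_of_int (N d x) + 1)) \<le> x"
    using assms by (simp add: field_simps)
  have "\<not> ?P (N d x + 1)"
    using greatest by fastforce
  then show "x < d * ((real_of_int (N d x) + 1) * (real_of_int (N d x) + 2))"
    using assms by (simp add: field_simps)
  show "0 \<le> N d x"
    using greatest \<open>?P 0\<close> by blast
qed

lemma less_succ_product_of_maximality:
  fixes d k n x :: real
  assumes "0 < d" and "0 < k + 1" and "0 < n + 1"
    and k_max: "d * x < (k + 1 - d) * (k + 1)"
    and n_max: "x < d * ((n + 1) * (n + 2))"
  shows "x < (n + 1) * (k + 1)"
proof (rule ccontr)
  assume "\<not> x < (n + 1) * (k + 1)"
  then have le_x: "(n + 1) * (k + 1) \<le> x"
    by simp
  have "d * ((n + 1) * (k + 1)) \<le> d * x"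
    using le_x \<open>0 < d\<close> by simp
  then have "(d * (n + 1)) * (k + 1) < (k + 1 - d) * (k + 1)"
    using k_max by (simp add: mult.assoc)
  then have "d * (n + 1) < k + 1 - d"
    by (rule mult_right_less_imp_less) (use \<open>0 < k + 1\<close> in simp)
  then have "d * (n + 2) < k + 1"
    by (simp add: algebra_simps)
  moreover have "(n + 1) * (k + 1) < (n + 1) * (d * (n + 2))"
    using le_x n_max by (simp add: mult_ac)
  then have "k + 1 < d * (n + 2)"
    using \<open>0 < n + 1\<close> by simp
  ultimately show False
    by simp
qed

lemma product_le_of_defining_bounds:
  fixes d k n x :: real
  assumes "0 < d" and "0 < k" and "0 \<le> n"
    and k_bound: "(k - d) * k \<le> d * x"
    and n_bound: "d * (n * (n + 1)) \<le> x"
  shows "n * k \<le> x"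
proof (rule ccontr)
  assume "\<not> n * k \<le> x"
  then have x_less: "x < n * k"
    by simp
  have "0 < n"
    using x_less n_bound \<open>0 \<le> n\<close> by (cases "n = 0") auto
  have "(k - d) * k < (d * n) * k"
    using k_bound mult_strict_left_mono[OF x_less \<open>0 < d\<close>] by (simp add: mult.assoc)
  then have "k - d < d * n"
    by (rule mult_right_less_imp_less) (use \<open>0 < k\<close> in simp)
  moreover have "n * (d * (n + 1)) < n * k"
    using n_bound x_less by (simp add: mult_ac)
  then have "d * (n + 1) < k"
    by (rule mult_left_less_imp_less) (use \<open>0 < n\<close> in simp)
  ultimately show False
    by (simp add: algebra_simps)
qed

theorem proposition4:
  fixes d :: int and x :: real
  assumes "0 < d" and "real_of_int d \<le> x"
  shows "\<lfloor>x / real_of_int (K d x + 1)\<rfloor> \<le> N d x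
         \<and> N d x \<le> \<lfloor>x / real_of_int (K d x)\<rfloor>"
proof -
  define k where "k = K d x"
  define n where "n = N d x"
  have "0 \<le> x"
    using assms by linarith
  note K = K_bounds[OF \<open>0 < d\<close> this, folded k_def]
  note N = N_bounds[OF \<open>0 < d\<close> \<open>0 \<le> x\<close>, folded n_def]
  have "0 < k"
    using K(3) \<open>0 < d\<close> by simp
  have "x < (real_of_int n + 1) * (real_of_int k + 1)"
    using less_succ_product_of_maximality[OF _ _ _ K(2) N(2)] assms \<open>0 < k\<close> N(3) by simp
  then have "x / real_of_int (k + 1) < n + 1"
    using \<open>0 < k\<close> by (simp add: divide_less_eq mult.commute)
  moreover have "real_of_int n * k \<le> x"
    using product_le_of_defining_bounds[OF _ _ _ K(1) N(1)] assms \<open>0 < k\<close> N(3) by simp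
  then have "real_of_int n \<le> x / real_of_int k"
    using \<open>0 < k\<close> by (simp add: le_divide_eq)
  ultimately show ?thesis
    unfolding k_def[symmetric] n_def[symmetric] floor_le_iff le_floor_iff by simp
qed

end
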